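(* Let $\mathcal{M}$ be a CTMC with $E(s)=1$ for all states $s$ and a unique absorbing goal state $g$; let $\delta>0$, $c=e^{\delta}$, $\mathcal{M}'=c\cdot\mathcal{M}$, $t\geq0$, and $N=\left\lceil\frac{(e^{\delta}-1)t}{\delta}\right\rceil$. Then $$\mathrm{Diff}_t(\mathcal{M}):=\left|\mathrm{Pr}^{\mathcal{M}'}(\lozenge^{\leq t}g)-\mathrm{Pr}^{\mathcal{M}}(\lozenge^{\leq t}g)\right|\leq\mathrm{Diff}_t(\mathcal{E}_N)=\sum_{k=0}^{N-1}\frac{t^k}{k!}\left(e^{-t}-c^ke^{-ct}\right).$$
   Context: In a CTMC the process stays in state $s$ an exponentially distributed time with rate $E(s)$ and then jumps to $s'$ with probability $P(s,s')$. $c\cdot\mathcal{M}$ is obtained by multiplying all exit rates by $c$. $\mathrm{Pr}^{\mathcal{M}}(\lozenge^{\leq t}g)$: probability of reaching $g$ from the initial state within time $t$. The Erlang CTMC $\mathcal{E}_N$ has states $s_0,\dots,s_{N-1},s_N=g$, initial state $s_0$ (only $g$ if $N=0$), all exit rates $1$, $P(s_i,s_{i+1})=1$ for $i<N$, $P(g,g)=1$, with $g$ labeled differently from the equally labeled $s_0,\dots,s_{N-1}$; $\mathrm{Diff}_t(\mathcal{E}_N)=|\mathrm{Pr}^{\mathcal{E}_N}(\lozenge^{\leq t}g)-\mathrm{Pr}^{c\cdot\mathcal{E}_N}(\lozenge^{\leq t}g)|$. *)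

theory Defs
  imports "HOL-Probability.Probability"
begin

text \<open>A CTMC is given by a finite state set S, exit rates E, and transition
probabilities P of the embedded jump chain. A finite path is a list of states
ss = [s_0, ..., s_k]; the process spends an exponentially distributed time with
rate E(s_i) in s_i (independently), then jumps.\<close>

definition hold_prob :: "('s \<Rightarrow> real) \<Rightarrow> 's list \<Rightarrow> real \<Rightarrow> real" where
  "hold_prob E ss t =
     (let k = length ss - 1;
          M = PiM {..<k} (\<lambda>i. density lborel (exponential_density (E (ss ! i))))
      in measure M {x \<in> space M. (\<Sum>i<k. x i) \<le> t})"

definition first_hit_paths :: "'s set \<Rightarrow> 's \<Rightarrow> 's \<Rightarrow> nat \<Rightarrow> 's list set" where
  "first_hit_paths S s0 g k =
     {ss. length ss = Suc k \<and> set ss \<subseteq> S \<and> hd ss = s0 \<and> last ss = g \<and> g \<notin> set (butlast ss)}"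

text \<open>Time-bounded reachability Pr(eventually-within-t g) from s0: the event is the disjoint
union over k of the cylinder sets "first hit g at jump k, and the k-th jump time is \<le> t".\<close>
definition ctmc_reach :: "'s set \<Rightarrow> ('s \<Rightarrow> real) \<Rightarrow> ('s \<Rightarrow> 's \<Rightarrow> real) \<Rightarrow> 's \<Rightarrow> 's \<Rightarrow> real \<Rightarrow> real" where
  "ctmc_reach S E P s0 g t =
     (\<Sum>k. \<Sum>ss\<in>first_hit_paths S s0 g k.
            (\<Prod>i<k. P (ss ! i) (ss ! Suc i)) * hold_prob E ss t)"

definition scale_rates :: "real \<Rightarrow> ('s \<Rightarrow> real) \<Rightarrow> 's \<Rightarrow> real" where
  "scale_rates c E = (\<lambda>s. c * E s)"

text \<open>Erlang CTMC E_N: states 0..N (state i = s_i, N = g), rates 1, initial state 0.\<close>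
definition erlang_P :: "nat \<Rightarrow> nat \<Rightarrow> nat \<Rightarrow> real" where
  "erlang_P N i j = (if i < N then (if j = Suc i then 1 else 0) else (if j = i then 1 else 0))"

definition erlang_diff :: "real \<Rightarrow> real \<Rightarrow> nat \<Rightarrow> real" where
  "erlang_diff c t N =
     \<bar>ctmc_reach {0..N} (\<lambda>_. 1) (erlang_P N) 0 N t
      - ctmc_reach {0..N} (scale_rates c (\<lambda>_. 1)) (erlang_P N) 0 N t\<bar>"

end

theory Submission
  imports Defs
begin

text \<open>With all exit rates equal to r, the sojourn times are i.i.d. exponential, so the
probability of reaching g within t is \<open>\<Sum>\<^sub>k p\<^sub>k G\<^sub>r(k)\<close>, where \<open>p\<^sub>k\<close> is the probability
that the embedded chain first hits g after exactly k jumps and \<open>G\<^sub>r(k)\<close> is the Erlang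
CDF, i.e. the Poisson tail \<open>P(Poisson(rt) \<ge> k)\<close>. Hence the difference between rates c and 1
is \<open>\<Sum>\<^sub>k p\<^sub>k d\<^sub>k\<close> with \<open>d\<^sub>k = \<Sum>\<^sub>n\<^sub><\<^sub>k e\<^sub>n\<close> and \<open>e\<^sub>n = t\<^sup>n/n! (e\<^sup>-\<^sup>t - c\<^sup>n e\<^sup>-\<^sup>c\<^sup>t)\<close>.
The terms \<open>e\<^sub>n\<close> sum to 0 and change sign exactly once, at N, so \<open>0 \<le> d\<^sub>k \<le> d\<^sub>N\<close>; as the
\<open>p\<^sub>k\<close> have total mass at most 1, the difference lies in \<open>[0, d\<^sub>N]\<close>. The Erlang chain
\<open>\<E>\<^sub>N\<close> has \<open>p\<^sub>k = [k = N]\<close> and attains the bound.\<close>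

definition poisson_tail :: "real \<Rightarrow> nat \<Rightarrow> real" where
  "poisson_tail \<mu> k = 1 - (\<Sum>n<k. \<mu> ^ n * exp (- \<mu>) / fact n)"

lemma poisson_tail_Suc_eq_erlang_CDF:
  assumes "0 \<le> t"
  shows "poisson_tail (r * t) (Suc k) = erlang_CDF k r t"
  using assms by (simp add: poisson_tail_def erlang_CDF_def lessThan_Suc_atMost)

lemma poisson_tail_nonneg:
  assumes "0 \<le> \<mu>"
  shows "0 \<le> poisson_tail \<mu> k"
proof (cases k)
  case (Suc m)
  then show ?thesis
    using poisson_tail_Suc_eq_erlang_CDF[OF assms, of 1 m] erlang_CDF_nonneg[of 1 m \<mu>] by simp
qed (simp add: poisson_tail_def)

lemma poisson_tail_le_1:
  assumes "0 \<le> \<mu>"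
  shows "poisson_tail \<mu> k \<le> 1"
  using assms by (auto simp: poisson_tail_def intro!: sum_nonneg)

lemma poisson_tail_diff:
  "poisson_tail (c * t) k - poisson_tail t k =
     (\<Sum>n<k. t ^ n / fact n * (exp (- t) - c ^ n * exp (- c * t)))"
  unfolding poisson_tail_def
  by (simp add: sum_subtractf[symmetric] power_mult_distrib field_simps)

lemma sums_poisson_diff:
  fixes c t :: real
  shows "(\<lambda>n. t ^ n / fact n * (exp (- t) - c ^ n * exp (- c * t))) sums 0"
proof -
  have exp_series: "(\<lambda>n. x ^ n / fact n) sums exp x" for x :: real
    using exp_converges[of x] by (simp add: divide_inverse mult.commute)
  have "(\<lambda>n. exp (- t) * (t ^ n / fact n) - exp (- c * t) * ((c * t) ^ n / fact n)) sums
      (exp (- t) * exp t - exp (- c * t) * exp (c * t))"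
    by (intro sums_diff sums_mult exp_series)
  then show ?thesis
    by (simp add: exp_minus power_mult_distrib field_simps)
qed

lemma poisson_diff_nonneg:
  assumes "0 \<le> t" and "real n * \<delta> \<le> (exp \<delta> - 1) * t"
  shows "0 \<le> t ^ n / fact n * (exp (- t) - exp \<delta> ^ n * exp (- exp \<delta> * t))"
proof -
  have "exp \<delta> ^ n * exp (- exp \<delta> * t) = exp (real n * \<delta> - exp \<delta> * t)"
    by (simp add: exp_diff exp_of_nat_mult[symmetric] exp_minus divide_inverse)
  also have "\<dots> \<le> exp (- t)"
    using assms(2) by (simp add: algebra_simps)
  finally show ?thesis
    using assms(1) by simp
qed

lemma poisson_diff_nonpos:
  assumes "0 \<le> t" and "(exp \<delta> - 1) * t \<le> real n * \<delta>"
  shows "t ^ n / fact n * (exp (- t) - exp \<delta> ^ n * exp (- exp \<delta> * t)) \<le> 0"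
proof -
  have "exp (- t) \<le> exp (real n * \<delta> - exp \<delta> * t)"
    using assms(2) by (simp add: algebra_simps)
  also have "\<dots> = exp \<delta> ^ n * exp (- exp \<delta> * t)"
    by (simp add: exp_diff exp_of_nat_mult[symmetric] exp_minus divide_inverse)
  finally show ?thesis
    using assms(1) by (intro mult_nonneg_nonpos) auto
qed

lemma sum_lessThan_sign_change_bounds:
  fixes e :: "nat \<Rightarrow> real"
  assumes sums: "e sums 0"
    and pos: "\<And>n. n < N \<Longrightarrow> 0 \<le> e n" and neg: "\<And>n. N \<le> n \<Longrightarrow> e n \<le> 0"
  shows "0 \<le> (\<Sum>n<k. e n)" and "(\<Sum>n<k. e n) \<le> (\<Sum>n<N. e n)"
proof -
  have "0 \<le> (\<Sum>n<k. e n)" if "N \<le> k" for k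
  proof -
    have "0 = (\<Sum>n. e (n + k)) + (\<Sum>n<k. e n)"
      using suminf_split_initial_segment[OF sums_summable[OF sums]] sums_unique[OF sums] by simp
    moreover have "(\<Sum>n. e (n + k)) \<le> (\<Sum>n. 0)"
      using that neg summable_ignore_initial_segment[OF sums_summable[OF sums]]
      by (intro suminf_le) auto
    ultimately show ?thesis by simp
  qed
  then show "0 \<le> (\<Sum>n<k. e n)"
    using pos by (cases "k \<le> N") (auto intro: sum_nonneg)
  show "(\<Sum>n<k. e n) \<le> (\<Sum>n<N. e n)"
  proof (cases "k \<le> N")
    case True
    then have "(\<Sum>n<N. e n) = (\<Sum>n<k. e n) + (\<Sum>n\<in>{k..<N}. e n)"
      by (simp add: lessThan_atLeast0 sum.atLeastLessThan_concat)
    moreover have "0 \<le> (\<Sum>n\<in>{k..<N}. e n)"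
      using pos by (intro sum_nonneg) auto
    ultimately show ?thesis by linarith
  next
    case False
    then have "(\<Sum>n<k. e n) = (\<Sum>n<N. e n) + (\<Sum>n\<in>{N..<k}. e n)"
      by (simp add: lessThan_atLeast0 sum.atLeastLessThan_concat)
    moreover have "(\<Sum>n\<in>{N..<k}. e n) \<le> 0"
      using neg by (intro sum_nonpos) auto
    ultimately show ?thesis by linarith
  qed
qed

lemma abs_suminf_mult_diff_le:
  fixes p a b :: "nat \<Rightarrow> real"
  assumes p_nonneg: "\<And>k. 0 \<le> p k" and p_partial: "\<And>n. (\<Sum>k<n. p k) \<le> 1"
    and a: "\<And>k. \<bar>a k\<bar> \<le> 1" and b: "\<And>k. \<bar>b k\<bar> \<le> 1"
    and gap: "\<And>k. 0 \<le> b k - a k \<and> b k - a k \<le> D"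
  shows "\<bar>(\<Sum>k. p k * b k) - (\<Sum>k. p k * a k)\<bar> \<le> D"
proof -
  have p: "summable p"
    using p_nonneg p_partial by (rule summableI_nonneg_bounded)
  have "summable (\<lambda>k. p k * f k)" if "\<And>k. \<bar>f k\<bar> \<le> 1" for f :: "nat \<Rightarrow> real"
    using p_nonneg that
    by (intro summable_comparison_test'[OF p]) (auto simp: abs_mult intro: mult_left_le)
  then have "(\<Sum>k. p k * b k) - (\<Sum>k. p k * a k) = (\<Sum>k. p k * (b k - a k))"
    and pd: "summable (\<lambda>k. p k * (b k - a k))"
    using a b by (auto simp: suminf_diff summable_diff right_diff_distrib)
  moreover have "0 \<le> (\<Sum>k. p k * (b k - a k))"
    using pd p_nonneg gap by (intro suminf_nonneg) auto
  moreover have "(\<Sum>k. p k * (b k - a k)) \<le> (\<Sum>k. p k * D)"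
    using pd summable_mult2[OF p] p_nonneg gap by (intro suminf_le mult_left_mono) auto
  moreover have "(\<Sum>k. p k * D) \<le> D"
    using suminf_le_const[OF p p_partial] suminf_nonneg[OF p p_nonneg] gap[of 0]
    by (simp add: suminf_mult2[OF p, symmetric] mult_left_le_one_le)
  ultimately show ?thesis by simp
qed

lemma indep_vars_PiM_components:
  assumes prob: "\<And>i. prob_space (M i)"
    and sets_eq: "\<And>i. i \<in> I \<Longrightarrow> sets (M' i) = sets (M i)"
  shows "prob_space.indep_vars (PiM I M) M' (\<lambda>i x. x i) I"
proof -
  interpret product_prob_space M I
    by (intro product_prob_spaceI prob)
  show ?thesis
  proof (cases "I = {}")
    case True
    then show ?thesis
      unfolding P.indep_vars_def P.indep_sets_def by simp
  next
    case False
    have meas: "measurable (PiM I M) (M' i) = measurable (PiM I M) (M i)" if "i \<in> I" for i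
      using sets_eq[OF that] by (rule measurable_cong_sets[OF refl])
    have component: "distr (PiM I M) (M' i) (\<lambda>x. x i) = M i" if "i \<in> I" for i
    proof -
      have "distr (PiM I M) (M' i) (\<lambda>x. x i) = distr (PiM I M) (M i) (\<lambda>x. x i)"
        using sets_eq[OF that] by (intro distr_cong) auto
      then show ?thesis
        using PiM_component[OF that] by simp
    qed
    have "distr (PiM I M) (PiM I M') (\<lambda>x. restrict x I) = distr (PiM I M) (PiM I M) (\<lambda>x. x)"
      using sets_eq by (intro distr_cong sets_PiM_cong) (auto simp: space_PiM PiE_def extensional_restrict)
    also have "\<dots> = PiM I M"
      by (rule distr_id2) (rule refl)
    also have "\<dots> = PiM I (\<lambda>i. distr (PiM I M) (M' i) (\<lambda>x. x i))"
      using component by (intro PiM_cong) auto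
    finally show ?thesis
      using False meas
      by (subst P.indep_vars_iff_distr_eq_PiM') (auto simp: measurable_component_singleton)
  qed
qed

lemma measure_PiM_exponential_sum_le:
  fixes r t :: real
  assumes r: "0 < r" and t: "0 \<le> t" and finI: "finite I"
  defines "M \<equiv> PiM I (\<lambda>_. density lborel (exponential_density r))"
  shows "measure M {x \<in> space M. (\<Sum>i\<in>I. x i) \<le> t} = poisson_tail (r * t) (card I)"
proof (cases "I = {}")
  case True
  then show ?thesis
    using t unfolding M_def by (simp add: PiM_empty poisson_tail_def)
next
  case False
  let ?D = "density lborel (exponential_density r)"
  interpret product_prob_space "\<lambda>_. ?D" I
    by (intro product_prob_spaceI prob_space_exponential_density r)
  have indep: "P.indep_vars (\<lambda>_. borel) (\<lambda>i x. x i) I"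
    by (intro indep_vars_PiM_components prob_space_exponential_density r) simp
  have "distributed M lborel (\<lambda>x. x i) (exponential_density r)" if "i \<in> I" for i
  proof -
    have "distr M lborel (\<lambda>x. x i) = distr M ?D (\<lambda>x. x i)"
      by (intro distr_cong) auto
    then show ?thesis
      using PiM_component[OF that] that unfolding M_def distributed_def by simp
  qed
  then have "distributed M lborel (\<lambda>x. \<Sum>i\<in>I. x i) (erlang_density (card I - 1) r)"
    using P.exponential_distributed_sum[OF finI False r _ indep] unfolding M_def by simp
  then have "measure M {x \<in> space M. (\<Sum>i\<in>I. x i) \<le> t} = erlang_CDF (card I - 1) r t"
    using P.erlang_distributed_le[OF _ r t] unfolding M_def by simp
  also have "\<dots> = poisson_tail (r * t) (card I)"
    using poisson_tail_Suc_eq_erlang_CDF[OF t, of r "card I - 1"] finI False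
    by (simp add: card_gt_0_iff)
  finally show ?thesis .
qed

lemma hold_prob_uniform_rate:
  assumes "0 < r" and "0 \<le> t" and "\<And>s. s \<in> set ss \<Longrightarrow> E s = r"
  shows "hold_prob E ss t = poisson_tail (r * t) (length ss - 1)"
proof -
  have "PiM {..<length ss - 1} (\<lambda>i. density lborel (exponential_density (E (ss ! i))))
      = PiM {..<length ss - 1} (\<lambda>i. density lborel (exponential_density r))"
    using assms(3) by (intro PiM_cong) auto
  then show ?thesis
    using measure_PiM_exponential_sum_le[OF assms(1,2), of "{..<length ss - 1}"]
    by (simp add: hold_prob_def)
qed

definition first_hit_prob :: "'s set \<Rightarrow> ('s \<Rightarrow> 's \<Rightarrow> real) \<Rightarrow> 's \<Rightarrow> 's \<Rightarrow> nat \<Rightarrow> real" where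
  "first_hit_prob S P s g k = (\<Sum>ss\<in>first_hit_paths S s g k. \<Prod>i<k. P (ss ! i) (ss ! Suc i))"

lemma finite_first_hit_paths: "finite S \<Longrightarrow> finite (first_hit_paths S s g k)"
  by (rule finite_subset[OF _ finite_lists_length_eq[of S "Suc k"]])
     (auto simp: first_hit_paths_def)

lemma first_hit_paths_0: "first_hit_paths S s g 0 = (if s \<in> S \<and> s = g then {[s]} else {})"
  by (auto simp: first_hit_paths_def length_Suc_conv)

lemma first_hit_paths_Suc:
  "first_hit_paths S s g (Suc k) =
     (if s \<in> S \<and> s \<noteq> g then (#) s ` (\<Union>s'\<in>S. first_hit_paths S s' g k) else {})"
proof -
  have "ss \<in> first_hit_paths S s g (Suc k) \<longleftrightarrow>
        s \<in> S \<and> s \<noteq> g \<and> (\<exists>ys. ss = s # ys \<and> ys \<in> first_hit_paths S (hd ys) g k \<and> hd ys \<in> S)"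
    for ss
    by (cases ss; cases "tl ss") (auto simp: first_hit_paths_def)
  then show ?thesis
    by (auto simp: first_hit_paths_def)
qed

lemma first_hit_prob_0: "first_hit_prob S P s g 0 = (if s \<in> S \<and> s = g then 1 else 0)"
  by (auto simp: first_hit_prob_def first_hit_paths_0)

lemma first_hit_prob_Suc:
  assumes "finite S"
  shows "first_hit_prob S P s g (Suc k) =
    (if s \<in> S \<and> s \<noteq> g then (\<Sum>s'\<in>S. P s s' * first_hit_prob S P s' g k) else 0)"
proof (cases "s \<in> S \<and> s \<noteq> g")
  case True
  let ?w = "\<lambda>k ss. \<Prod>i<k. P (ss ! i) (ss ! Suc i)"
  have hd_path: "ys ! 0 = s'" if "ys \<in> first_hit_paths S s' g k" for ys s'
    using that by (cases ys) (auto simp: first_hit_paths_def)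
  have disjoint: "first_hit_paths S s' g k \<inter> first_hit_paths S s'' g k = {}" if "s' \<noteq> s''" for s' s''
    using that hd_path by blast
  have "first_hit_prob S P s g (Suc k) = (\<Sum>ys\<in>(\<Union>s'\<in>S. first_hit_paths S s' g k). ?w (Suc k) (s # ys))"
    using True by (simp add: first_hit_prob_def first_hit_paths_Suc sum.reindex)
  also have "\<dots> = (\<Sum>s'\<in>S. \<Sum>ys\<in>first_hit_paths S s' g k. ?w (Suc k) (s # ys))"
    using assms disjoint by (intro sum.UNION_disjoint) (auto simp: finite_first_hit_paths)
  also have "\<dots> = (\<Sum>s'\<in>S. \<Sum>ys\<in>first_hit_paths S s' g k. P s s' * ?w k ys)"
    by (intro sum.cong refl, subst prod.lessThan_Suc_shift) (simp add: hd_path)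
  finally show ?thesis
    using True by (simp add: first_hit_prob_def sum_distrib_left)
qed (auto simp: first_hit_prob_def first_hit_paths_Suc)

lemma first_hit_prob_nonneg:
  assumes "\<forall>s\<in>S. \<forall>s'. 0 \<le> P s s'"
  shows "0 \<le> first_hit_prob S P s g k"
  unfolding first_hit_prob_def
proof (intro sum_nonneg prod_nonneg)
  fix ss i assume "ss \<in> first_hit_paths S s g k" "i \<in> {..<k}"
  then have "ss ! i \<in> S"
    by (auto simp: first_hit_paths_def intro!: subsetD[of "set ss" S] nth_mem)
  then show "0 \<le> P (ss ! i) (ss ! Suc i)"
    using assms by auto
qed

lemma sum_first_hit_prob_le_1:
  assumes "finite S" and "\<forall>s\<in>S. \<forall>s'. 0 \<le> P s s'" and "\<forall>s\<in>S. (\<Sum>s'\<in>S. P s s') = 1"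
  shows "(\<Sum>k<n. first_hit_prob S P s g k) \<le> 1"
proof (induction n arbitrary: s)
  case (Suc n)
  show ?case
  proof (cases "s \<in> S \<and> s \<noteq> g")
    case True
    have "(\<Sum>k<Suc n. first_hit_prob S P s g k) = (\<Sum>k<n. \<Sum>s'\<in>S. P s s' * first_hit_prob S P s' g k)"
      unfolding sum.lessThan_Suc_shift using True assms(1) by (simp add: first_hit_prob_0 first_hit_prob_Suc)
    also have "\<dots> = (\<Sum>s'\<in>S. P s s' * (\<Sum>k<n. first_hit_prob S P s' g k))"
      by (subst sum.swap) (simp add: sum_distrib_left)
    also have "\<dots> \<le> (\<Sum>s'\<in>S. P s s' * 1)"
      using Suc.IH assms(2) True by (intro sum_mono mult_left_mono) auto
    also have "\<dots> = 1"
      using assms(3) True by simp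
    finally show ?thesis .
  qed (auto simp: sum.lessThan_Suc_shift first_hit_prob_0 first_hit_prob_Suc assms(1) simp del: sum.lessThan_Suc)
qed simp

lemma first_hit_prob_erlang:
  "first_hit_prob {0..N} (erlang_P N) i N k = (if i \<le> N \<and> k = N - i then 1 else 0)"
proof (induction k arbitrary: i)
  case (Suc k)
  show ?case
  proof (cases "i < N")
    case True
    have "first_hit_prob {0..N} (erlang_P N) i N (Suc k) = first_hit_prob {0..N} (erlang_P N) (Suc i) N k"
      using True by (simp add: first_hit_prob_Suc erlang_P_def if_distrib[of "\<lambda>x. x * _"] sum.delta cong: if_cong)
    then show ?thesis
      using Suc.IH True by (auto simp: Suc_diff_Suc)
  qed (simp add: first_hit_prob_Suc)
qed (auto simp: first_hit_prob_0)

lemma ctmc_reach_uniform_rate: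
  assumes "\<forall>s\<in>S. E s = r" and "0 < r" and "0 \<le> t"
  shows "ctmc_reach S E P s0 g t = (\<Sum>k. first_hit_prob S P s0 g k * poisson_tail (r * t) k)"
  unfolding ctmc_reach_def first_hit_prob_def sum_distrib_right
proof (intro suminf_cong sum.cong refl)
  fix k ss
  assume "ss \<in> first_hit_paths S s0 g k"
  then have "length ss - 1 = k" and "set ss \<subseteq> S"
    by (auto simp: first_hit_paths_def)
  then show "(\<Prod>i<k. P (ss ! i) (ss ! Suc i)) * hold_prob E ss t =
      (\<Prod>i<k. P (ss ! i) (ss ! Suc i)) * poisson_tail (r * t) k"
    using hold_prob_uniform_rate[OF assms(2,3), of ss E] assms(1) by auto
qed

lemma ctmc_reach_erlang:
  assumes "\<forall>s\<in>{0..N}. E s = r" and "0 < r" and "0 \<le> t"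
  shows "ctmc_reach {0..N} E (erlang_P N) 0 N t = poisson_tail (r * t) N"
proof -
  have "ctmc_reach {0..N} E (erlang_P N) 0 N t = (\<Sum>k. if k = N then poisson_tail (r * t) k else 0)"
    unfolding ctmc_reach_uniform_rate[OF assms] first_hit_prob_erlang by (intro suminf_cong) simp
  also have "\<dots> = poisson_tail (r * t) N"
    by (rule sums_unique[symmetric, OF sums_single])
  finally show ?thesis .
qed

theorem proposition5:
  fixes S :: "'s set" and E :: "'s \<Rightarrow> real" and P :: "'s \<Rightarrow> 's \<Rightarrow> real"
    and s0 g :: 's and \<delta> c t :: real and N :: nat
  assumes finS: "finite S" and s0S: "s0 \<in> S" and gS: "g \<in> S"
    and P_nonneg: "\<forall>s\<in>S. \<forall>s'. P s s' \<ge> 0"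
    and P_closed: "\<forall>s\<in>S. \<forall>s'. s' \<notin> S \<longrightarrow> P s s' = 0"
    and P_stoch: "\<forall>s\<in>S. (\<Sum>s'\<in>S. P s s') = 1"
    and E_one: "\<forall>s\<in>S. E s = 1"
    and g_absorbing: "P g g = 1"
    and g_unique: "\<forall>s\<in>S. P s s = 1 \<longrightarrow> s = g"
    and delta_pos: "\<delta> > 0"
    and c_def: "c = exp \<delta>"
    and t_nonneg: "t \<ge> 0"
    and N_def: "N = nat \<lceil>(exp \<delta> - 1) * t / \<delta>\<rceil>"
  shows "\<bar>ctmc_reach S (scale_rates c E) P s0 g t - ctmc_reach S E P s0 g t\<bar> \<le> erlang_diff c t N
         \<and> erlang_diff c t N = (\<Sum>k<N. t ^ k / fact k * (exp (- t) - c ^ k * exp (- c * t)))"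
proof -
  have c_pos: "0 < c" and scaled: "\<forall>s\<in>S. scale_rates c E s = c"
    using c_def E_one by (auto simp: scale_rates_def)
  define e where "e n = t ^ n / fact n * (exp (- t) - c ^ n * exp (- c * t))" for n
  have N_iff: "n < N \<longleftrightarrow> real n * \<delta> < (exp \<delta> - 1) * t" for n
    using delta_pos unfolding N_def by (simp add: not_le[symmetric] nat_ceiling_le_eq pos_divide_le_eq)
  have e_nonneg: "0 \<le> e n" if "n < N" for n
    using poisson_diff_nonneg[OF t_nonneg, of n \<delta>] N_iff[of n] that unfolding e_def c_def by simp
  have e_nonpos: "e n \<le> 0" if "N \<le> n" for n
    using poisson_diff_nonpos[OF t_nonneg, of \<delta> n] N_iff[of n] that unfolding e_def c_def by simp
  have "e sums 0"
    unfolding e_def by (rule sums_poisson_diff)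
  note d_bounds = sum_lessThan_sign_change_bounds[of e N, OF this e_nonneg e_nonpos]
  have gap: "poisson_tail (c * t) k - poisson_tail (1 * t) k = (\<Sum>n<k. e n)" for k
    by (simp add: e_def poisson_tail_diff)
  have tail_bounds: "\<bar>poisson_tail (r * t) k\<bar> \<le> 1" if "0 < r" for r k
    using that t_nonneg poisson_tail_nonneg[of "r * t" k] poisson_tail_le_1[of "r * t" k] by simp
  have "\<bar>ctmc_reach S (scale_rates c E) P s0 g t - ctmc_reach S E P s0 g t\<bar> \<le> (\<Sum>n<N. e n)"
    unfolding ctmc_reach_uniform_rate[OF scaled c_pos t_nonneg] ctmc_reach_uniform_rate[OF E_one zero_less_one t_nonneg]
    using first_hit_prob_nonneg[OF P_nonneg] sum_first_hit_prob_le_1[OF finS P_nonneg P_stoch]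
      tail_bounds[OF c_pos] tail_bounds[of 1, simplified] gap d_bounds
    by (intro abs_suminf_mult_diff_le) auto
  moreover have "erlang_diff c t N = (\<Sum>n<N. e n)"
    using ctmc_reach_erlang[of N "\<lambda>_. 1" 1] ctmc_reach_erlang[of N "scale_rates c (\<lambda>_. 1)" c]
      c_pos t_nonneg gap[of N] d_bounds(1)[of N]
    by (simp add: erlang_diff_def scale_rates_def)
  ultimately show ?thesis
    unfolding e_def by simp
qed

end
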